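(* For each $k\in\mathbb N$ let $m_k\in\mathbb N$ with $\lim_{k\to\infty}m_k/k=0$. (a) For every $a>0$ there exist $\epsilon(a)>0$ and $k_0,m_0\in\mathbb N$ such that for all $k\ge k_0$ and all integers $m\in[m_0,m_k]$, $$I\Bigl(j+1,k-j+1;\frac{m-a\sqrt m}{k}\Bigr)\ge\epsilon(a),\qquad j=0,\dots,m-1.$$ (b) For every $\epsilon>0$ there exist $a>0$, $k_0\in\mathbb N$ and $m_0=m_0(a)$ such that for all $k\ge k_0$ and all integers $m\in[m_0,m_k]$, $$I\Bigl(j+1,k-j+1;\frac{m-a\sqrt m}{k}\Bigr)\le\epsilon\,I\Bigl(j+1,k-j+1;\frac mk\Bigr),\qquad j=m,\dots,k.$$
   Context: For $a,b>0$ and $x\in(0,1)$, $I(a,b;x)=\frac{1}{\beta(a,b)}\int_0^x t^{a-1}(1-t)^{b-1}dt$ is the normalized incomplete beta function, where $\beta(a,b)=\int_0^1t^{a-1}(1-t)^{b-1}dt=\frac{\Gamma(a)\Gamma(b)}{\Gamma(a+b)}$. *)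

theory Defs
  imports "HOL-Analysis.Analysis"
begin

definition inc_beta :: "real \<Rightarrow> real \<Rightarrow> real \<Rightarrow> real" where
  "inc_beta a b x = integral {0..x} (\<lambda>t. t powr (a - 1) * (1 - t) powr (b - 1)) / Beta a b"

end

theory Submission
  imports Defs
begin

text \<open>
  Write I(j+1, k-j+1; x) as the mass of [0, x] under the kernel g(t) = t^j (1-t)^(k-j),
  divided by its total mass Beta(j+1, k-j+1).  Stretching by a factor c <= 1 maps [u, v] onto
  [c u, c v]; as (1 - c t)/(1 - t) is monotone in t, the ratio g(c t)/g(t) on [u, v] lies between
  the values of c^j ((1 - c t)/(1 - t))^(k-j) at the two endpoints.  Hence masses of intervals can
  be compared up to explicit factors, whose logarithms are controlled by the second-order bounds
  for ln (1 - d) together with 1 - 1/r <= ln r <= r - 1.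

  For j >= m, stretching [0, m/k] by c = 1 - a/sqrt m onto [0, (m - a sqrt m)/k] shows that the
  mass of the latter is at most exp(-a^2/2) times that of the former, which is (b).  For j < m, let x = (m - a sqrt m)/k and
  y = (m + 4 sqrt m)/k.  Stretching [y, 1] by 1 - 1/sqrt m at least doubles its mass, so at most
  half of the total mass lies above y; stretching [x, y] onto [x^2/y, x] shrinks its mass by a
  factor depending only on a.  So [0, x] carries a fixed fraction of the total mass, which is (a).
\<close>

lemma integral_stretch_interval:
  fixes f :: "real \<Rightarrow> real"
  assumes "0 < c"
  shows "integral {c * u..c * v} f = c * integral {u..v} (\<lambda>t. f (c * t))"
  using integral_stretch_real[of c "c * u" "c * v" f] assms by simp

lemma integrable_stretch_interval:
  fixes f :: "real \<Rightarrow> real"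
  assumes "0 < c" "f integrable_on {c * u..c * v}"
  shows "(\<lambda>t. f (c * t)) integrable_on {u..v}"
  using integrable_stretch_real[OF assms(2), of c] assms(1) by simp

lemma integral_stretch_ge:
  fixes f :: "real \<Rightarrow> real"
  assumes "0 < c" "f integrable_on {u..v}" "f integrable_on {c * u..c * v}"
    and "\<And>t. t \<in> {u..v} \<Longrightarrow> K * f t \<le> f (c * t)"
  shows "c * K * integral {u..v} f \<le> integral {c * u..c * v} f"
proof -
  have "integral {u..v} (\<lambda>t. K * f t) \<le> integral {u..v} (\<lambda>t. f (c * t))"
    using assms integrable_stretch_interval
    by (intro integral_le) (auto intro: integrable_on_mult_right)
  then show ?thesis
    using assms(1) by (simp add: integral_stretch_interval mult.assoc)
qed

lemma integral_stretch_le: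
  fixes f :: "real \<Rightarrow> real"
  assumes "0 < c" "f integrable_on {u..v}" "f integrable_on {c * u..c * v}"
    and "\<And>t. t \<in> {u..v} \<Longrightarrow> f (c * t) \<le> K * f t"
  shows "integral {c * u..c * v} f \<le> c * K * integral {u..v} f"
proof -
  have "integral {u..v} (\<lambda>t. f (c * t)) \<le> integral {u..v} (\<lambda>t. K * f t)"
    using assms integrable_stretch_interval
    by (intro integral_le) (auto intro: integrable_on_mult_right)
  then show ?thesis
    using assms(1) by (simp add: integral_stretch_interval mult.assoc)
qed

definition beta_kernel :: "real \<Rightarrow> real \<Rightarrow> real \<Rightarrow> real" where
  "beta_kernel a b t = t powr (a - 1) * (1 - t) powr (b - 1)"

lemma beta_kernel_nonneg: "0 \<le> beta_kernel a b t"
  by (simp add: beta_kernel_def)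

lemma beta_kernel_integrable:
  assumes "0 < a" "0 < b" "0 \<le> u" "v \<le> 1"
  shows "beta_kernel a b integrable_on {u..v}"
  using integrable_on_subinterval[OF integrable_Beta'[OF assms(1,2)]] assms(3,4)
  by (simp add: beta_kernel_def[abs_def])

lemma integral_beta_kernel:
  assumes "0 < a" "0 < b"
  shows "integral {0..1} (beta_kernel a b) = Beta a b"
  using has_integral_Beta_real[OF assms] by (simp add: beta_kernel_def[abs_def] integral_unique)

lemma Beta_real_pos: "0 < a \<Longrightarrow> 0 < b \<Longrightarrow> 0 < Beta a b" for a b :: real
  by (simp add: Beta_def)

lemma inc_beta_eq: "inc_beta a b x = integral {0..x} (beta_kernel a b) / Beta a b"
  by (simp add: inc_beta_def beta_kernel_def[abs_def])

lemma inc_beta_nonneg: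
  assumes "0 < a" "0 < b" "0 \<le> x" "x \<le> 1"
  shows "0 \<le> inc_beta a b x"
  using assms Beta_real_pos[OF assms(1,2)]
  by (simp add: inc_beta_eq integral_nonneg beta_kernel_integrable beta_kernel_nonneg)

lemma beta_kernel_stretch_ge:
  assumes "1 \<le> b" "0 \<le> r" "t \<le> 1" "r * (1 - t) \<le> 1 - c * t"
  shows "c powr (a - 1) * r powr (b - 1) * beta_kernel a b t \<le> beta_kernel a b (c * t)"
proof -
  have "r powr (b - 1) * (1 - t) powr (b - 1) \<le> (1 - c * t) powr (b - 1)"
    using powr_mono2[of "b - 1" "r * (1 - t)" "1 - c * t"] assms by (simp add: powr_mult)
  then have "t powr (a - 1) * (r powr (b - 1) * (1 - t) powr (b - 1))
      \<le> t powr (a - 1) * (1 - c * t) powr (b - 1)"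
    by (rule mult_left_mono) simp
  then show ?thesis
    unfolding beta_kernel_def powr_mult
    by (simp add: mult_left_mono mult_ac)
qed

lemma beta_kernel_stretch_le:
  assumes "1 \<le> b" "0 \<le> 1 - c * t" "1 - c * t \<le> r * (1 - t)"
  shows "beta_kernel a b (c * t) \<le> c powr (a - 1) * r powr (b - 1) * beta_kernel a b t"
proof -
  have "(1 - c * t) powr (b - 1) \<le> r powr (b - 1) * (1 - t) powr (b - 1)"
    using powr_mono2[of "b - 1" "1 - c * t" "r * (1 - t)"] assms by (simp add: powr_mult)
  then have "t powr (a - 1) * (1 - c * t) powr (b - 1)
      \<le> t powr (a - 1) * (r powr (b - 1) * (1 - t) powr (b - 1))"
    by (rule mult_left_mono) simp
  then show ?thesis
    unfolding beta_kernel_def powr_mult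
    by (simp add: mult_left_mono mult_ac)
qed

definition stretch_factor :: "real \<Rightarrow> real \<Rightarrow> real \<Rightarrow> real \<Rightarrow> real" where
  "stretch_factor p q c u = c powr p * ((1 - c * u) / (1 - u)) powr q"

lemma integral_beta_kernel_stretch_ge:
  assumes "0 < a" "1 \<le> b" "0 < c" "c \<le> 1" "0 \<le> u" "u \<le> v" "v \<le> 1" "u < 1"
  shows "stretch_factor a (b - 1) c u * integral {u..v} (beta_kernel a b)
           \<le> integral {c * u..c * v} (beta_kernel a b)"
proof -
  define r where "r = (1 - c * u) / (1 - u)"
  have "c * (c powr (a - 1) * r powr (b - 1)) * integral {u..v} (beta_kernel a b)
          \<le> integral {c * u..c * v} (beta_kernel a b)"
  proof (rule integral_stretch_ge)
    show "beta_kernel a b integrable_on {u..v}" "beta_kernel a b integrable_on {c * u..c * v}"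
      using assms mult_mono[of c 1 v 1] by (auto intro!: beta_kernel_integrable)
  next
    fix t assume t: "t \<in> {u..v}"
    have "(1 - c * u) * (1 - t) \<le> (1 - c * t) * (1 - u)"
      using mult_left_mono[of u t "1 - c"] t assms by (simp add: algebra_simps)
    then have "r * (1 - t) \<le> 1 - c * t"
      using assms by (simp add: r_def field_simps)
    moreover have "0 \<le> r"
      using assms mult_mono[of c 1 u 1] by (simp add: r_def)
    ultimately show "c powr (a - 1) * r powr (b - 1) * beta_kernel a b t \<le> beta_kernel a b (c * t)"
      using t assms by (intro beta_kernel_stretch_ge) auto
  qed (use assms in simp)
  moreover have "c * c powr (a - 1) = c powr a"
    using powr_mult_base[of c "a - 1"] assms by simp
  ultimately show ?thesis
    by (simp add: stretch_factor_def r_def flip: mult.assoc)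
qed

lemma integral_beta_kernel_stretch_le:
  assumes "0 < a" "1 \<le> b" "0 < c" "c \<le> 1" "0 \<le> v" "v < 1"
  shows "integral {0..c * v} (beta_kernel a b)
           \<le> stretch_factor a (b - 1) c v * integral {0..v} (beta_kernel a b)"
proof -
  define r where "r = (1 - c * v) / (1 - v)"
  have "integral {c * 0..c * v} (beta_kernel a b)
          \<le> c * (c powr (a - 1) * r powr (b - 1)) * integral {0..v} (beta_kernel a b)"
  proof (rule integral_stretch_le)
    show "beta_kernel a b integrable_on {0..v}" "beta_kernel a b integrable_on {c * 0..c * v}"
      using assms mult_mono[of c 1 v 1] by (auto intro!: beta_kernel_integrable)
  next
    fix t assume t: "t \<in> {0..v}"
    have "(1 - c * t) * (1 - v) \<le> (1 - c * v) * (1 - t)"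
      using mult_left_mono[of t v "1 - c"] t assms by (simp add: algebra_simps)
    then have "1 - c * t \<le> r * (1 - t)"
      using assms by (simp add: r_def field_simps)
    moreover have "c * t \<le> 1"
      using t assms mult_mono[of c 1 t 1] by simp
    ultimately show "beta_kernel a b (c * t) \<le> c powr (a - 1) * r powr (b - 1) * beta_kernel a b t"
      using assms by (intro beta_kernel_stretch_le) auto
  qed (use assms in simp)
  moreover have "c * c powr (a - 1) = c powr a"
    using powr_mult_base[of c "a - 1"] assms by simp
  ultimately show ?thesis
    by (simp add: stretch_factor_def r_def flip: mult.assoc)
qed

lemma ln_one_minus_pos_upper_bound_quadratic:
  fixes x :: real
  assumes "0 \<le> x" "x < 1"
  shows "ln (1 - x) \<le> - x - x\<^sup>2 / 2"
proof -
  define h where "h y = ln (1 - y) + y + y\<^sup>2 / 2" for y :: real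
  have "h x \<le> h 0"
  proof (rule DERIV_nonpos_imp_nonincreasing[OF assms(1)])
    fix y assume y: "0 \<le> y" "y \<le> x"
    then have "(h has_real_derivative - (y\<^sup>2 / (1 - y))) (at y)"
      unfolding h_def using assms
      by (auto intro!: derivative_eq_intros simp: field_simps power2_eq_square)
    then show "\<exists>d. (h has_real_derivative d) (at y) \<and> d \<le> 0"
      using y assms by fastforce
  qed
  then show ?thesis by (simp add: h_def)
qed

lemma stretch_factor_ge_exp:
  assumes "0 \<le> \<delta>" "\<delta> \<le> 1/2" "0 \<le> u" "u < 1" "0 \<le> p" "p \<le> P" "0 \<le> Q" "Q \<le> q"
  shows "exp (Q * (u * \<delta> / (1 - (1 - \<delta>) * u)) - P * (\<delta> + 2 * \<delta>\<^sup>2))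
           \<le> stretch_factor p q (1 - \<delta>) u"
proof -
  define r where "r = (1 - (1 - \<delta>) * u) / (1 - u)"
  have r1: "1 \<le> r"
    using assms mult_right_mono[of "1 - \<delta>" 1 u] by (simp add: r_def)
  have "0 < 1 - (1 - \<delta>) * u"
    using assms mult_right_mono[of "1 - \<delta>" 1 u] by simp
  then have "u * \<delta> / (1 - (1 - \<delta>) * u) = 1 - 1 / r"
    using assms by (simp add: r_def field_simps)
  also have "\<dots> \<le> ln r"
    using ln_le_minus_one[of "1 / r"] r1 by (simp add: ln_div)
  finally have "Q * (u * \<delta> / (1 - (1 - \<delta>) * u)) \<le> Q * ln r"
    using assms by (intro mult_left_mono) auto
  also have "\<dots> \<le> q * ln r"
    using assms r1 by (intro mult_right_mono) auto
  finally have "Q * (u * \<delta> / (1 - (1 - \<delta>) * u)) \<le> q * ln r" .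
  moreover have "- P * (\<delta> + 2 * \<delta>\<^sup>2) \<le> p * ln (1 - \<delta>)"
  proof -
    have "- (\<delta> + 2 * \<delta>\<^sup>2) \<le> ln (1 - \<delta>)"
      using ln_one_minus_pos_lower_bound[of \<delta>] assms by simp
    then have "p * - (\<delta> + 2 * \<delta>\<^sup>2) \<le> p * ln (1 - \<delta>)"
      using assms by (intro mult_left_mono) auto
    moreover have "P * - (\<delta> + 2 * \<delta>\<^sup>2) \<le> p * - (\<delta> + 2 * \<delta>\<^sup>2)"
      using assms by (intro mult_right_mono_neg) (auto intro: order_trans[of _ 0])
    ultimately show ?thesis by (simp add: algebra_simps)
  qed
  ultimately have "exp (Q * (u * \<delta> / (1 - (1 - \<delta>) * u)) - P * (\<delta> + 2 * \<delta>\<^sup>2))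
                     \<le> exp (p * ln (1 - \<delta>) + q * ln r)"
    by simp
  also have "\<dots> = (1 - \<delta>) powr p * r powr q"
    using assms r1 by (simp add: powr_def exp_add)
  also have "\<dots> = stretch_factor p q (1 - \<delta>) u"
    by (simp add: stretch_factor_def r_def)
  finally show ?thesis .
qed

lemma stretch_factor_le_exp:
  assumes "0 \<le> \<delta>" "\<delta> < 1" "0 \<le> v" "v < 1" "0 \<le> P" "P \<le> p" "0 \<le> q" "q \<le> Q"
  shows "stretch_factor p q (1 - \<delta>) v \<le> exp (Q * (v * \<delta> / (1 - v)) - P * (\<delta> + \<delta>\<^sup>2 / 2))"
proof -
  define r where "r = (1 - (1 - \<delta>) * v) / (1 - v)"
  have r_eq: "r = 1 + v * \<delta> / (1 - v)"
    using assms by (simp add: r_def field_simps)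
  have vd: "0 \<le> v * \<delta> / (1 - v)"
    using assms by simp
  have "q * ln r \<le> Q * (v * \<delta> / (1 - v))"
  proof -
    have "ln r \<le> v * \<delta> / (1 - v)"
      unfolding r_eq using ln_add_one_self_le_self[OF vd] by (simp add: add.commute)
    moreover have "0 \<le> ln r"
      using vd by (simp add: r_eq)
    ultimately show ?thesis
      using assms vd by (meson mult_mono order_trans)
  qed
  moreover have "p * ln (1 - \<delta>) \<le> - P * (\<delta> + \<delta>\<^sup>2 / 2)"
  proof -
    have l: "ln (1 - \<delta>) \<le> - (\<delta> + \<delta>\<^sup>2 / 2)"
      using ln_one_minus_pos_upper_bound_quadratic[of \<delta>] assms by simp
    have "p * ln (1 - \<delta>) \<le> P * ln (1 - \<delta>)"
      using assms by (intro mult_right_mono_neg) auto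
    also have "\<dots> \<le> P * - (\<delta> + \<delta>\<^sup>2 / 2)"
      using assms l by (intro mult_left_mono) auto
    finally show ?thesis by (simp add: algebra_simps)
  qed
  ultimately have "exp (p * ln (1 - \<delta>) + q * ln r)
                     \<le> exp (Q * (v * \<delta> / (1 - v)) - P * (\<delta> + \<delta>\<^sup>2 / 2))"
    by simp
  moreover have "stretch_factor p q (1 - \<delta>) v = (1 - \<delta>) powr p * r powr q"
    by (simp add: stretch_factor_def r_def)
  moreover have "\<dots> = exp (p * ln (1 - \<delta>) + q * ln r)"
    using assms vd by (simp add: r_eq powr_def exp_add add_pos_nonneg del: divide_nonneg_nonneg)
  ultimately show ?thesis by simp
qed

lemma inc_beta_upper_bound:
  fixes a s m j k :: real
  assumes "0 < a" "a < s" "m = s\<^sup>2" "m < k" "m \<le> j" "j \<le> k"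
  shows "inc_beta (j + 1) (k - j + 1) ((m - a * s) / k)
           \<le> exp (- (a\<^sup>2 / 2)) * inc_beta (j + 1) (k - j + 1) (m / k)"
proof -
  define \<delta> where "\<delta> = a / s"
  define v where "v = m / k"
  have s0: "0 < s"
    using assms by simp
  have m0: "0 < m"
    using s0 assms(3) by simp
  have k0: "0 < k"
    using m0 assms(4) by simp
  have \<delta>: "0 \<le> \<delta>" "\<delta> < 1" and v: "0 \<le> v" "v < 1"
    using assms s0 m0 k0 by (auto simp: \<delta>_def v_def)
  have x_eq: "(1 - \<delta>) * v = (m - a * s) / k"
    using s0 k0 by (simp add: \<delta>_def v_def assms(3) field_simps power2_eq_square)
  have exponent: "(k - m) * (v * \<delta> / (1 - v)) - m * (\<delta> + \<delta>\<^sup>2 / 2) = - (a\<^sup>2 / 2)"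
    using s0 k0 assms(4) by (simp add: \<delta>_def v_def assms(3) field_simps power2_eq_square)
  have "integral {0..(m - a * s) / k} (beta_kernel (j + 1) (k - j + 1))
          \<le> stretch_factor (j + 1) (k - j) (1 - \<delta>) v * integral {0..v} (beta_kernel (j + 1) (k - j + 1))"
    using integral_beta_kernel_stretch_le[of "j + 1" "k - j + 1" "1 - \<delta>" v] assms m0 \<delta> v
    by (simp add: x_eq)
  also have "\<dots> \<le> exp (- (a\<^sup>2 / 2)) * integral {0..v} (beta_kernel (j + 1) (k - j + 1))"
  proof (rule mult_right_mono)
    have "stretch_factor (j + 1) (k - j) (1 - \<delta>) v
            \<le> exp ((k - m) * (v * \<delta> / (1 - v)) - m * (\<delta> + \<delta>\<^sup>2 / 2))"
      by (rule stretch_factor_le_exp[OF \<delta> v]) (use assms m0 in auto)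
    then show "stretch_factor (j + 1) (k - j) (1 - \<delta>) v \<le> exp (- (a\<^sup>2 / 2))"
      by (simp only: exponent)
    show "0 \<le> integral {0..v} (beta_kernel (j + 1) (k - j + 1))"
      using assms(5,6) m0 v by (intro integral_nonneg beta_kernel_integrable beta_kernel_nonneg) auto
  qed
  finally show ?thesis
    using Beta_real_pos[of "j + 1" "k - j + 1"] assms m0
    by (simp add: inc_beta_eq v_def divide_right_mono)
qed

lemma tail_stretch_exponent_ge:
  fixes s m k :: real
  assumes "4 \<le> s" "m = s\<^sup>2" "m + 4 * s < k"
  defines "y \<equiv> (m + 4 * s) / k" and "\<delta> \<equiv> 1 / s"
  shows "2 \<le> (k - m) * (y * \<delta> / (1 - (1 - \<delta>) * y)) - m * (\<delta> + 2 * \<delta>\<^sup>2)"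
proof -
  have s0: "0 < s"
    using assms(1) by simp
  have k0: "0 < k"
    using assms(1-3) zero_le_power2[of s] by linarith
  have den: "0 < k - (s - 1) * (s + 4)" "k - (s - 1) * (s + 4) \<le> k - m"
    using assms by (auto simp: algebra_simps power2_eq_square)
  have y_eq: "y = s * (s + 4) / k"
    by (simp add: y_def assms(2) power2_eq_square algebra_simps)
  have "y * \<delta> = (s + 4) / k" and "1 - (1 - \<delta>) * y = (k - (s - 1) * (s + 4)) / k"
    using s0 k0 by (simp_all add: y_eq \<delta>_def field_simps)
  then have "y * \<delta> / (1 - (1 - \<delta>) * y) = (s + 4) / (k - (s - 1) * (s + 4))"
    using k0 by simp
  moreover have "s + 4 \<le> (k - m) * ((s + 4) / (k - (s - 1) * (s + 4)))"
    using den mult_left_mono[OF den(2), of "s + 4"] s0 by (simp add: le_divide_eq mult.commute)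
  moreover have "m * (\<delta> + 2 * \<delta>\<^sup>2) = s + 2"
    using s0 by (simp add: \<delta>_def assms(2) field_simps power2_eq_square)
  ultimately show ?thesis
    by simp
qed

lemma integral_beta_kernel_upper_tail:
  fixes s m j k :: real
  assumes "4 \<le> s" "m = s\<^sup>2" "m + 4 * s < k" "0 \<le> j" "j + 1 \<le> m"
  shows "2 * integral {(m + 4 * s) / k..1} (beta_kernel (j + 1) (k - j + 1)) \<le> Beta (j + 1) (k - j + 1)"
proof -
  define y where "y = (m + 4 * s) / k"
  define \<delta> where "\<delta> = 1 / s"
  have s0: "0 < s" and k0: "0 < k" and jk: "j \<le> k"
    using assms by (auto simp: power2_eq_square)
  have \<delta>: "0 \<le> \<delta>" "\<delta> \<le> 1/2" and y: "0 \<le> y" "y < 1"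
    using assms s0 k0 by (auto simp: \<delta>_def y_def)
  have "exp 2 \<le> stretch_factor (j + 1) (k - j) (1 - \<delta>) y"
    using tail_stretch_exponent_ge[OF assms(1-3)] stretch_factor_ge_exp[OF \<delta> y, of "j + 1" m "k - m" "k - j"] assms
    by (auto simp: y_def \<delta>_def intro: order_trans)
  then have factor: "2 \<le> stretch_factor (j + 1) (k - j) (1 - \<delta>) y"
    using exp_ge_add_one_self[of 2] by linarith
  have "2 * integral {y..1} (beta_kernel (j + 1) (k - j + 1))
          \<le> stretch_factor (j + 1) (k - j) (1 - \<delta>) y * integral {y..1} (beta_kernel (j + 1) (k - j + 1))"
    using y jk assms
    by (intro mult_right_mono[OF factor] integral_nonneg beta_kernel_integrable beta_kernel_nonneg) auto
  also have "\<dots> \<le> integral {(1 - \<delta>) * y..(1 - \<delta>) * 1} (beta_kernel (j + 1) (k - j + 1))"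
    using integral_beta_kernel_stretch_ge[of "j + 1" "k - j + 1" "1 - \<delta>" y 1] assms jk \<delta> y by simp
  also have "\<dots> \<le> integral {0..1} (beta_kernel (j + 1) (k - j + 1))"
    using \<delta> y jk assms
    by (intro integral_subset_le beta_kernel_integrable beta_kernel_nonneg ballI) auto
  also have "\<dots> = Beta (j + 1) (k - j + 1)"
    using jk assms by (intro integral_beta_kernel) auto
  finally show ?thesis
    by (simp add: y_def)
qed

lemma window_endpoints:
  fixes a s m k :: real
  assumes "0 < a" "2 * a + 4 \<le> s" "m = s\<^sup>2" "(1 + (a + 4) * (2 * a + 4)) * m \<le> k"
  shows "m + 4 * s < k" and "0 \<le> (m - a * s) / k" and "(m - a * s) / k \<le> (m + 4 * s) / k"
    and "(m + 4 * s) / k < 1" and "(1 - (a + 4) / (s + 4)) * ((m + 4 * s) / k) = (m - a * s) / k"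
proof -
  have s0: "0 < s" and m0: "0 < m"
    using assms(1,2,3) by auto
  have "16 \<le> (a + 4) * (2 * a + 4)"
    using mult_mono[of 4 "a + 4" 4 "2 * a + 4"] assms(1) by simp
  then have "17 * m \<le> k"
    using assms(4) mult_right_mono[of 17 "1 + (a + 4) * (2 * a + 4)" m] m0 by linarith
  moreover have "4 * s \<le> m"
    using assms(1,2,3) mult_right_mono[of 4 s s] by (simp add: power2_eq_square)
  ultimately show mk: "m + 4 * s < k"
    using m0 by linarith
  then have k0: "0 < k"
    using s0 m0 by linarith
  have "a * s \<le> m"
    using assms(1,2,3) s0 by (simp add: power2_eq_square mult_right_mono)
  then show "0 \<le> (m - a * s) / k"
    using k0 by simp
  show "(m - a * s) / k \<le> (m + 4 * s) / k"
    using k0 mult_pos_pos[OF assms(1) s0] s0 by (auto intro!: divide_right_mono)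
  show "(m + 4 * s) / k < 1"
    using mk k0 by simp
  have c_eq: "1 - (a + 4) / (s + 4) = (s - a) / (s + 4)"
    using s0 by (simp add: field_simps)
  have y_eq: "(m + 4 * s) / k = (s + 4) * (s / k)"
    by (simp add: assms(3) power2_eq_square algebra_simps add_divide_distrib)
  have "(1 - (a + 4) / (s + 4)) * ((m + 4 * s) / k) = (s - a) * (s / k)"
    unfolding c_eq y_eq using s0 by simp
  then show "(1 - (a + 4) / (s + 4)) * ((m + 4 * s) / k) = (m - a * s) / k"
    by (simp add: assms(3) power2_eq_square algebra_simps diff_divide_distrib)
qed

lemma window_log_gain_first_order:
  fixes a d s m k :: real
  assumes "0 < a" "a \<le> s" "0 \<le> d" "d \<le> s" "m = s\<^sup>2" "m < k"
  defines "x \<equiv> (m - a * s) / k"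
  shows "(s - a) * d * (1 - (a + d) * s / (k - m)) \<le> (k - m) * (x * (d / s) / (1 - (1 - d / s) * x))"
proof -
  have s0: "0 < s" and km: "0 < k - m" and k0: "0 < k"
    using assms(1,2,5,6) zero_le_power2[of s] by linarith+
  have den_lower: "k - m \<le> k - (s - d) * (s - a)"
    using mult_mono[of "s - d" s "s - a" s] assms(1-5) by (simp add: power2_eq_square)
  have den_upper: "k - (s - d) * (s - a) \<le> (k - m) + (a + d) * s"
    using assms(1,3,5) by (simp add: algebra_simps power2_eq_square)
  have "x * (d / s) = (s - a) * d / k" and "1 - (1 - d / s) * x = (k - (s - d) * (s - a)) / k"
    using s0 k0 by (simp_all add: x_def assms(5) power2_eq_square field_simps)
  then have ratio: "x * (d / s) / (1 - (1 - d / s) * x) = (s - a) * d / (k - (s - d) * (s - a))"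
    using k0 by simp
  have "1 - z / D \<le> D / (D + z)" if "0 < D" "0 \<le> z" for D z :: real
    using that by (simp add: field_simps)
  then have "1 - (a + d) * s / (k - m) \<le> (k - m) / ((k - m) + (a + d) * s)"
    using km assms(1,3) s0 by simp
  also have "\<dots> \<le> (k - m) / (k - (s - d) * (s - a))"
    using km den_upper den_lower by (intro divide_left_mono) auto
  finally have "(s - a) * d * (1 - (a + d) * s / (k - m))
                  \<le> (s - a) * d * ((k - m) / (k - (s - d) * (s - a)))"
    using assms(2,3) by (intro mult_left_mono) auto
  also have "\<dots> = (k - m) * (x * (d / s) / (1 - (1 - d / s) * x))"
    unfolding ratio by simp
  finally show ?thesis .
qed

lemma window_log_gain_ge:
  fixes a d s m k :: real
  assumes "0 < a" "a \<le> s" "0 \<le> d" "d \<le> a + 4" "d \<le> s" "m = s\<^sup>2"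
    and "(1 + (a + 4) * (2 * a + 4)) * m \<le> k"
  defines "x \<equiv> (m - a * s) / k"
  shows "s * d - a * (a + 4) - 1 \<le> (k - m) * (x * (d / s) / (1 - (1 - d / s) * x))"
proof -
  have m0: "0 < m"
    using assms(1,2,6) by auto
  have budget: "(a + 4) * (2 * a + 4) * m \<le> k - m"
    using assms(7) by (simp add: algebra_simps)
  moreover have "0 < (a + 4) * (2 * a + 4) * m"
    using assms(1) m0 by simp
  ultimately have km: "0 < k - m"
    by linarith
  have "(s - a) * s \<le> m"
    using assms(1,2,6) by (simp add: power2_eq_square algebra_simps)
  then have "(s - a) * s * (d * (a + d) / (k - m)) \<le> m * (d * (a + d) / (k - m))"
    using assms(1,3) km by (intro mult_right_mono) auto
  moreover have "m * (d * (a + d)) \<le> (a + 4) * (2 * a + 4) * m"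
    using mult_mono[OF assms(4), of "a + d" "2 * a + 4"] assms(1,3,4) m0 by (simp add: mult_ac)
  then have "m * (d * (a + d) / (k - m)) \<le> 1"
    using budget km by (simp add: field_simps)
  moreover have "a * d \<le> a * (a + 4)"
    using assms(1,4) by simp
  moreover have "(s - a) * d * (1 - (a + d) * s / (k - m)) \<le> (k - m) * (x * (d / s) / (1 - (1 - d / s) * x))"
    unfolding x_def using km by (intro window_log_gain_first_order[OF assms(1,2,3,5,6)]) simp
  ultimately show ?thesis
    by (simp add: algebra_simps)
qed

lemma window_stretch_exponent_ge:
  fixes a s m k :: real
  assumes "0 < a" "2 * a + 4 \<le> s" "m = s\<^sup>2" "(1 + (a + 4) * (2 * a + 4)) * m \<le> k"
  defines "x \<equiv> (m - a * s) / k" and "\<delta> \<equiv> (a + 4) / (s + 4)"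
  shows "- (2 * (a + 4)\<^sup>2 + a * (a + 4) + 1)
           \<le> (k - m) * (x * \<delta> / (1 - (1 - \<delta>) * x)) - m * (\<delta> + 2 * \<delta>\<^sup>2)"
proof -
  define d where "d = s * (a + 4) / (s + 4)"
  have s0: "0 < s"
    using assms(1,2) by simp
  have d: "0 \<le> d" "d \<le> a + 4" "d \<le> s"
    using assms(1,2) s0 by (auto simp: d_def field_simps)
  have \<delta>_eq: "\<delta> = d / s"
    using s0 by (simp add: \<delta>_def d_def)
  have "s * d - a * (a + 4) - 1 \<le> (k - m) * (x * \<delta> / (1 - (1 - \<delta>) * x))"
    unfolding \<delta>_eq x_def by (rule window_log_gain_ge[OF assms(1) _ d assms(3,4)]) (use assms(1,2) in simp)
  moreover have "m * (\<delta> + 2 * \<delta>\<^sup>2) = s * d + 2 * d\<^sup>2"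
    using s0 by (simp add: \<delta>_eq assms(3) field_simps power2_eq_square)
  moreover have "d\<^sup>2 \<le> (a + 4)\<^sup>2"
    using d by (intro power_mono) auto
  ultimately show ?thesis
    by (simp add: algebra_simps)
qed

lemma integral_beta_kernel_window:
  fixes a s m j k :: real
  assumes "0 < a" "2 * a + 4 \<le> s" "m = s\<^sup>2" "(1 + (a + 4) * (2 * a + 4)) * m \<le> k"
    and "0 \<le> j" "j + 1 \<le> m"
  shows "exp (- (2 * (a + 4)\<^sup>2 + a * (a + 4) + 1))
           * integral {(m - a * s) / k..(m + 4 * s) / k} (beta_kernel (j + 1) (k - j + 1))
         \<le> integral {0..(m - a * s) / k} (beta_kernel (j + 1) (k - j + 1))"
proof -
  define x where "x = (m - a * s) / k"
  define y where "y = (m + 4 * s) / k"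
  define \<delta> where "\<delta> = (a + 4) / (s + 4)"
  note mk = window_endpoints(1)[OF assms(1-4)]
  have x: "0 \<le> x" "x \<le> y" "x < 1" and y: "y < 1"
    using window_endpoints(2-4)[OF assms(1-4)] by (simp_all add: x_def y_def)
  have s0: "0 < s" and jk: "j \<le> k"
    using assms(1,2,6) mk by auto
  have \<delta>: "0 \<le> \<delta>" "\<delta> \<le> 1/2"
    using assms(1,2) s0 by (auto simp: \<delta>_def field_simps)
  have shrink: "(1 - \<delta>) * y = x"
    using window_endpoints(5)[OF assms(1-4)] by (simp add: x_def y_def \<delta>_def)
  have "exp (- (2 * (a + 4)\<^sup>2 + a * (a + 4) + 1))
          \<le> exp ((k - m) * (x * \<delta> / (1 - (1 - \<delta>) * x)) - m * (\<delta> + 2 * \<delta>\<^sup>2))"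
    using window_stretch_exponent_ge[OF assms(1-4)] by (simp add: x_def \<delta>_def)
  also have "\<dots> \<le> stretch_factor (j + 1) (k - j) (1 - \<delta>) x"
    by (rule stretch_factor_ge_exp[OF \<delta> x(1,3)]) (use assms(5,6) mk s0 in auto)
  finally have factor: "exp (- (2 * (a + 4)\<^sup>2 + a * (a + 4) + 1))
                          \<le> stretch_factor (j + 1) (k - j) (1 - \<delta>) x" .
  have "exp (- (2 * (a + 4)\<^sup>2 + a * (a + 4) + 1)) * integral {x..y} (beta_kernel (j + 1) (k - j + 1))
          \<le> stretch_factor (j + 1) (k - j) (1 - \<delta>) x * integral {x..y} (beta_kernel (j + 1) (k - j + 1))"
    using x y assms(5,6) jk
    by (intro mult_right_mono[OF factor] integral_nonneg beta_kernel_integrable beta_kernel_nonneg) auto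
  also have "\<dots> \<le> integral {(1 - \<delta>) * x..(1 - \<delta>) * y} (beta_kernel (j + 1) (k - j + 1))"
    using integral_beta_kernel_stretch_ge[of "j + 1" "k - j + 1" "1 - \<delta>" x y] assms jk \<delta> x y by simp
  also have "\<dots> \<le> integral {0..x} (beta_kernel (j + 1) (k - j + 1))"
    unfolding shrink using \<delta> x assms jk mult_left_le_one_le[of x "1 - \<delta>"]
    by (intro integral_subset_le beta_kernel_integrable beta_kernel_nonneg ballI) auto
  finally show ?thesis
    by (simp add: x_def y_def)
qed

lemma inc_beta_lower_bound:
  fixes a s m j k :: real
  assumes "0 < a" "2 * a + 4 \<le> s" "m = s\<^sup>2" "(1 + (a + 4) * (2 * a + 4)) * m \<le> k"
    and "0 \<le> j" "j + 1 \<le> m"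
  defines "\<kappa> \<equiv> exp (- (2 * (a + 4)\<^sup>2 + a * (a + 4) + 1))"
  shows "\<kappa> / (2 * (1 + \<kappa>)) \<le> inc_beta (j + 1) (k - j + 1) ((m - a * s) / k)"
proof -
  define x where "x = (m - a * s) / k"
  define y where "y = (m + 4 * s) / k"
  define K where "K = beta_kernel (j + 1) (k - j + 1)"
  define B where "B = Beta (j + 1) (k - j + 1)"
  note mk = window_endpoints(1)[OF assms(1-4)]
  have x: "0 \<le> x" "x \<le> y" and y: "y \<le> 1"
    using window_endpoints(2-4)[OF assms(1-4)] by (simp_all add: x_def y_def)
  have jk: "j \<le> k"
    using assms(1,2,6) mk by auto
  have window: "\<kappa> * integral {x..y} K \<le> integral {0..x} K"
    using integral_beta_kernel_window[OF assms(1-6)] by (simp add: \<kappa>_def x_def y_def K_def)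
  have tail: "2 * integral {y..1} K \<le> B"
    using integral_beta_kernel_upper_tail[OF _ assms(3) mk assms(5,6)] assms(1,2)
    by (simp add: y_def K_def B_def)
  have split: "integral {0..x} K + integral {x..y} K + integral {y..1} K = B"
    using x y integral_beta_kernel[of "j + 1" "k - j + 1"] assms(5) jk
    by (simp add: Henstock_Kurzweil_Integration.integral_combine beta_kernel_integrable K_def B_def)
  have "\<kappa> * (2 * integral {y..1} K) \<le> \<kappa> * B"
    using tail by (simp add: \<kappa>_def)
  moreover have "\<kappa> * B = \<kappa> * integral {0..x} K + \<kappa> * integral {x..y} K + \<kappa> * integral {y..1} K"
    unfolding split[symmetric] by (simp add: distrib_left)
  ultimately have "\<kappa> * B \<le> 2 * (1 + \<kappa>) * integral {0..x} K"
    using window by (simp add: algebra_simps)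
  moreover have "0 < 2 * (1 + \<kappa>)" and "0 < B"
    using assms(5) jk by (simp_all add: \<kappa>_def B_def add_pos_pos Beta_real_pos)
  ultimately have "\<kappa> / (2 * (1 + \<kappa>)) \<le> integral {0..x} K / B"
    by (simp add: divide_le_eq le_divide_eq mult.commute)
  then show ?thesis
    by (simp add: inc_beta_eq x_def K_def B_def)
qed

lemma eventually_mult_less_of_ratio_tendsto_zero:
  fixes f :: "nat \<Rightarrow> nat"
  assumes "(\<lambda>k. real (f k) / real k) \<longlonglongrightarrow> 0" "0 < M"
  shows "\<forall>\<^sub>F k in sequentially. M * real (f k) < real k"
proof -
  have "\<forall>\<^sub>F k in sequentially. real (f k) / real k < 1 / M"
    using order_tendstoD(2)[OF assms(1)] assms(2) by simp
  moreover have "\<forall>\<^sub>F k in sequentially. 0 < k"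
    by (rule eventually_gt_at_top)
  ultimately show ?thesis
    by eventually_elim (use assms(2) in \<open>simp add: field_simps\<close>)
qed

lemma le_sqrt_if_nat_ceiling_le:
  assumes "nat \<lceil>b\<^sup>2\<rceil> \<le> m"
  shows "b \<le> sqrt (real m)"
proof (rule real_le_rsqrt)
  show "b\<^sup>2 \<le> real m"
    using real_nat_ceiling_ge[of "b\<^sup>2"] of_nat_mono[OF assms, where 'a=real] by linarith
qed

lemma inc_beta_lower_bound_eventually:
  fixes mk :: "nat \<Rightarrow> nat" and a :: real
  assumes lim: "(\<lambda>k. real (mk k) / real k) \<longlonglongrightarrow> 0" and a: "0 < a"
  shows "\<exists>eps>0. \<exists>k0 m0. \<forall>k\<ge>k0. \<forall>m. m0 \<le> m \<and> m \<le> mk k \<longrightarrow>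
           (\<forall>j\<in>{0..<m}. eps \<le> inc_beta (real j + 1) (real k - real j + 1) ((real m - a * sqrt (real m)) / real k))"
proof -
  define \<kappa> where "\<kappa> = exp (- (2 * (a + 4)\<^sup>2 + a * (a + 4) + 1))"
  obtain k0 where k0: "\<And>k. k0 \<le> k \<Longrightarrow> (1 + (a + 4) * (2 * a + 4)) * real (mk k) < real k"
    using eventually_mult_less_of_ratio_tendsto_zero[OF lim, of "1 + (a + 4) * (2 * a + 4)"] a
    by (auto simp: eventually_sequentially add_pos_nonneg)
  show ?thesis
  proof (intro exI conjI allI impI ballI)
    show "0 < \<kappa> / (2 * (1 + \<kappa>))"
      by (simp add: \<kappa>_def add_pos_pos)
    fix k m j
    assume "k0 \<le> k" and m: "nat \<lceil>(2 * a + 4)\<^sup>2\<rceil> \<le> m \<and> m \<le> mk k" and j: "j \<in> {0..<m}"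
    have "(1 + (a + 4) * (2 * a + 4)) * real m \<le> real k"
      using k0[OF \<open>k0 \<le> k\<close>] m a mult_left_mono[of "real m" "real (mk k)" "1 + (a + 4) * (2 * a + 4)"]
      by simp
    then show "\<kappa> / (2 * (1 + \<kappa>)) \<le> inc_beta (real j + 1) (real k - real j + 1) ((real m - a * sqrt (real m)) / real k)"
      using inc_beta_lower_bound[OF a le_sqrt_if_nat_ceiling_le, of m "real m" "real k" "real j"] m j
      by (simp add: \<kappa>_def)
  qed
qed

lemma inc_beta_upper_bound_eventually:
  fixes mk :: "nat \<Rightarrow> nat" and eps :: real
  assumes lim: "(\<lambda>k. real (mk k) / real k) \<longlonglongrightarrow> 0" and eps: "0 < eps"
  shows "\<exists>a>0. \<exists>k0 m0. \<forall>k\<ge>k0. \<forall>m. m0 \<le> m \<and> m \<le> mk k \<longrightarrow>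
           (\<forall>j\<in>{m..k}. inc_beta (real j + 1) (real k - real j + 1) ((real m - a * sqrt (real m)) / real k)
                         \<le> eps * inc_beta (real j + 1) (real k - real j + 1) (real m / real k))"
proof -
  define a where "a = 1 + 2 * \<bar>ln eps\<bar>"
  have a: "0 < a"
    by (simp add: a_def add_pos_nonneg)
  have "a \<le> a\<^sup>2"
    using power_increasing[of 1 2 a] by (simp add: a_def)
  then have "- (a\<^sup>2 / 2) \<le> ln eps"
    by (simp add: a_def)
  then have a_eps: "exp (- (a\<^sup>2 / 2)) \<le> eps"
    using eps by (simp add: ln_ge_iff)
  obtain k0 where k0: "\<And>k. k0 \<le> k \<Longrightarrow> 1 * real (mk k) < real k"
    using eventually_mult_less_of_ratio_tendsto_zero[OF lim, of 1] by (auto simp: eventually_sequentially)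
  show ?thesis
  proof (intro exI conjI allI impI ballI)
    show "0 < a"
      by (rule a)
    fix k m j
    assume "k0 \<le> k" and m: "nat \<lceil>(a + 1)\<^sup>2\<rceil> \<le> m \<and> m \<le> mk k" and j: "j \<in> {m..k}"
    have "m < k"
      using k0[OF \<open>k0 \<le> k\<close>] m by linarith
    then have "inc_beta (real j + 1) (real k - real j + 1) ((real m - a * sqrt (real m)) / real k)
                 \<le> exp (- (a\<^sup>2 / 2)) * inc_beta (real j + 1) (real k - real j + 1) (real m / real k)"
      using inc_beta_upper_bound[OF a _ _, of "sqrt (real m)" "real m" "real k" "real j"]
        le_sqrt_if_nat_ceiling_le[of "a + 1" m] m j
      by simp
    also have "\<dots> \<le> eps * inc_beta (real j + 1) (real k - real j + 1) (real m / real k)"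
      using j \<open>m < k\<close> a_eps by (intro mult_right_mono inc_beta_nonneg) auto
    finally show "inc_beta (real j + 1) (real k - real j + 1) ((real m - a * sqrt (real m)) / real k)
                    \<le> eps * inc_beta (real j + 1) (real k - real j + 1) (real m / real k)" .
  qed
qed

theorem lemma3p2:
  fixes mk :: "nat \<Rightarrow> nat"
  assumes lim: "(\<lambda>k. real (mk k) / real k) \<longlonglongrightarrow> 0"
  shows "(\<forall>a::real. a > 0 \<longrightarrow>
            (\<exists>eps::real. eps > 0 \<and> (\<exists>k0 m0::nat. \<forall>k\<ge>k0. \<forall>m::nat. m0 \<le> m \<and> m \<le> mk k \<longrightarrow>
               (\<forall>j\<in>{0..<m}. inc_beta (real j + 1) (real k - real j + 1)
                                 ((real m - a * sqrt (real m)) / real k) \<ge> eps))))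
       \<and> (\<forall>eps::real. eps > 0 \<longrightarrow>
            (\<exists>a::real. a > 0 \<and> (\<exists>k0 m0::nat. \<forall>k\<ge>k0. \<forall>m::nat. m0 \<le> m \<and> m \<le> mk k \<longrightarrow>
               (\<forall>j\<in>{m..k}. inc_beta (real j + 1) (real k - real j + 1)
                                 ((real m - a * sqrt (real m)) / real k)
                             \<le> eps * inc_beta (real j + 1) (real k - real j + 1) (real m / real k)))))"
  using inc_beta_lower_bound_eventually[OF lim] inc_beta_upper_bound_eventually[OF lim]
  by (simp add: atLeastLessThan_iff)

end
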